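(* Let $r>0$. For $h>0$ let $R_h$ be the two-dimensional hyperbolic complete orthoscheme, in the projective disc model $\mathbb{D}$, with vertices $P_0=(r,0)$, $P_1=(0,0)$, $P_2=(0,h)$, and let $A(h)$ be its hyperbolic area. Then: (1) If $r<1$, the area $A(h)$ attains its maximum over $h>0$ only at $h=1$, and the maximal area is $\pi/2-\alpha_1$, where $\alpha_1$ is the hyperbolic angle of $R_1$ at $P_0$. (2) If $r=1$, the area $A(h)$ attains its maximum at every $h\in[1,+\infty)$, and the maximal area is $\pi/2$. (3) If $r>1$, the area $A(h)$ attains its maximum at every $h\in[1, r/\sqrt{r^2-1}]$, and the maximal area is $\pi/2$.
   Context: The projective disc (Beltrami–Klein) model $\mathbb{D}$ of the hyperbolic plane is the open unit disc in $\mathbb{R}^2$, with hyperbolic lines the intersections of Euclidean lines with $\mathbb{D}$. Points on $\partial\mathbb{D}$ are ideal, points outside the closed disc ultraideal. An ultraideal point $v$ has a polar line: the hyperbolic line joining the two tangency points on $\partial\mathbb{D}$ of the tangent lines from $v$. Truncation of a Euclidean triangle at an ultraideal vertex $v$ means intersecting it with the closed half-plane bounded by the polar line of $v$ not containing $v$. The complete orthoscheme $R_h$ is the right-angled (at $P_1$) triangle $P_0P_1P_2$ intersected with $\mathbb{D}$, truncated at each of $P_0,P_2$ that is ultraideal; when both $P_0$ and $P_2$ are ultraideal and their polar lines intersect in $\mathbb{D}$, $R_h$ is the quadrilateral bounded by the edges $P_0P_1$, $P_1P_2$ and the two polar lines. *)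

theory Defs
  imports "HOL-Analysis.Analysis"
begin

text \<open>Projective (Beltrami--Klein) disc model; points are pairs of reals.\<close>

definition klein_disc :: "(real \<times> real) set" where
  "klein_disc = ball 0 1"

definition ultraideal :: "real \<times> real \<Rightarrow> bool" where
  "ultraideal v \<longleftrightarrow> norm v > 1"

text \<open>The polar line of an ultraideal point v is the line x . v = 1 (it passes through the
  two tangency points); the closed half-plane bounded by it not containing v is x . v \<le> 1.\<close>

definition polar_halfplane :: "real \<times> real \<Rightarrow> (real \<times> real) set" where
  "polar_halfplane v = {x. inner x v \<le> 1}"

definition truncate_at :: "real \<times> real \<Rightarrow> (real \<times> real) set \<Rightarrow> (real \<times> real) set" where
  "truncate_at v S = (if ultraideal v then S \<inter> polar_halfplane v else S)"

definition orthoscheme :: "real \<Rightarrow> real \<Rightarrow> (real \<times> real) set" where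
  "orthoscheme r h =
     truncate_at (0, h) (truncate_at (r, 0) (convex hull {(r,0), (0,0), (0,h)} \<inter> klein_disc))"

definition klein_area_density :: "real \<times> real \<Rightarrow> real" where
  "klein_area_density x = 1 / (1 - (norm x)\<^sup>2) powr (3/2)"

definition hyp_area :: "(real \<times> real) set \<Rightarrow> ennreal" where
  "hyp_area S = (\<integral>\<^sup>+ x. indicator (S \<inter> klein_disc) x * ennreal (klein_area_density x) \<partial>lborel)"

definition klein_metric :: "real \<times> real \<Rightarrow> real \<times> real \<Rightarrow> real \<times> real \<Rightarrow> real" where
  "klein_metric p u v =
     inner u v / (1 - (norm p)\<^sup>2) + inner p u * inner p v / (1 - (norm p)\<^sup>2)\<^sup>2"

definition klein_angle :: "real \<times> real \<Rightarrow> real \<times> real \<Rightarrow> real \<times> real \<Rightarrow> real" where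
  "klein_angle p u v =
     arccos (klein_metric p u v / sqrt (klein_metric p u u * klein_metric p v v))"

definition vertex_angle :: "real \<times> real \<Rightarrow> real \<times> real \<Rightarrow> real \<times> real \<Rightarrow> real" where
  "vertex_angle a b c = klein_angle a (b - a) (c - a)"

end

theory Submission
  imports Defs
begin

text \<open>
  Slice \<open>R\<^sub>h\<close> horizontally. The hyperbolic area of the segment \<open>[0, X] \<times> {y}\<close> is
  \<open>X / ((1 - y\<^sup>2) \<surd>(1 - y\<^sup>2 - X\<^sup>2))\<close>, and when the right end runs along a line
  \<open>X = p - q y\<close> this has the elementary primitive \<open>arctan ((p y - q) / \<surd>(1 - y\<^sup>2 - (p - q y)\<^sup>2))\<close>.
  So \<open>A(h)\<close> is a difference of boundary values of such primitives. For \<open>r < 1\<close> this gives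
  \<open>A(h) = arctan (r / (h \<surd>(1 - r\<^sup>2)))\<close> for \<open>h \<ge> 1\<close> and the same minus
  \<open>arctan (r \<surd>(1 - h\<^sup>2) / h)\<close> for \<open>h < 1\<close>; an arctangent subtraction shows the maximum is
  at \<open>h = 1\<close>, where it equals \<open>arcsin r = \<pi>/2 - \<alpha>\<^sub>1\<close>. For \<open>r = 1\<close> the primitive tends to
  \<open>-\<pi>/2\<close> at the ideal vertex \<open>P\<^sub>0\<close>; for \<open>r > 1\<close> and \<open>1 \<le> h \<le> r/\<surd>(r\<^sup>2 - 1)\<close> the two
  primitives meeting at the corner on the polar line of \<open>P\<^sub>0\<close> take the values \<open>arctan a\<close> and
  \<open>-arctan (1/a)\<close> there. Either way \<open>A(h) = \<pi>/2\<close>. For all other \<open>h\<close>, \<open>R\<^sub>h\<close> lies inside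
  \<open>R\<^sub>1\<close> or inside the orthoscheme of the critical height \<open>r/\<surd>(r\<^sup>2 - 1)\<close>, so \<open>A(h) \<le> \<pi>/2\<close>.
\<close>

section \<open>Hyperbolic area by horizontal slices\<close>

lemma nn_integral_open_interval_FTC:
  fixes F f :: "real \<Rightarrow> real" and a b A B :: real
  assumes "a < b"
    and "\<And>x. a < x \<Longrightarrow> x < b \<Longrightarrow> DERIV F x :> f x"
    and "\<And>x. a < x \<Longrightarrow> x < b \<Longrightarrow> isCont f x"
    and nonneg: "\<And>x. a < x \<Longrightarrow> x < b \<Longrightarrow> 0 \<le> f x"
    and "(F \<longlongrightarrow> A) (at_right a)"
    and "(F \<longlongrightarrow> B) (at_left b)"
  shows "(\<integral>\<^sup>+x. indicator {a<..<b} x * ennreal (f x) \<partial>lborel) = ennreal (B - A)"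
proof -
  have FTC: "set_integrable lborel (einterval a b) f" "(LBINT x=ereal a..ereal b. f x) = B - A"
    by (rule interval_integral_FTC_nonneg[where F=F];
        use assms in \<open>auto simp: ereal_tendsto_simps1\<close>)+
  have "(\<integral>\<^sup>+x. indicator {a<..<b} x * ennreal (f x) \<partial>lborel)
      = (\<integral>\<^sup>+x. ennreal (indicator {a<..<b} x * f x) \<partial>lborel)"
    by (intro nn_integral_cong) (auto split: split_indicator)
  also have "\<dots> = ennreal (LBINT x:{a<..<b}. f x)"
    unfolding set_lebesgue_integral_def using FTC(1) nonneg
    by (subst nn_integral_eq_integral) (auto simp: set_integrable_def split: split_indicator)
  also have "(LBINT x:{a<..<b}. f x) = B - A"
    using FTC(2) \<open>a < b\<close> by (simp add: interval_lebesgue_integral_def)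
  finally show ?thesis .
qed

lemma nn_integral_interval_split:
  fixes f :: "real \<Rightarrow> real"
  assumes "a \<le> m" "m \<le> b" and [measurable]: "f \<in> borel_measurable borel"
  shows "(\<integral>\<^sup>+y. indicator {a<..<b} y * ennreal (f y) \<partial>lborel) =
    (\<integral>\<^sup>+y. indicator {a<..<m} y * ennreal (f y) \<partial>lborel) + (\<integral>\<^sup>+y. indicator {m<..<b} y * ennreal (f y) \<partial>lborel)"
proof -
  have "(\<integral>\<^sup>+y. indicator {a<..<b} y * ennreal (f y) \<partial>lborel) =
      (\<integral>\<^sup>+y. indicator {a<..<m} y * ennreal (f y) + indicator {m<..<b} y * ennreal (f y) \<partial>lborel)"
    using AE_lborel_singleton[of m]
    by (intro nn_integral_cong_AE, eventually_elim) (use assms in \<open>auto split: split_indicator\<close>)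
  also have "\<dots> = (\<integral>\<^sup>+y. indicator {a<..<m} y * ennreal (f y) \<partial>lborel) + (\<integral>\<^sup>+y. indicator {m<..<b} y * ennreal (f y) \<partial>lborel)"
    by (rule nn_integral_add) auto
  finally show ?thesis .
qed

lemma klein_area_density_Pair:
  "x\<^sup>2 + y\<^sup>2 < 1 \<Longrightarrow> klein_area_density (x, y) = 1 / ((1 - y\<^sup>2 - x\<^sup>2) * sqrt (1 - y\<^sup>2 - x\<^sup>2))"
  unfolding klein_area_density_def norm_Pair
  by (simp add: powr_add[of _ 1 "1/2", simplified] powr_half_sqrt algebra_simps)

definition slice_area :: "real \<Rightarrow> real \<Rightarrow> real" where
  "slice_area y X = X / ((1 - y\<^sup>2) * sqrt (1 - y\<^sup>2 - X\<^sup>2))"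

lemma slice_area_has_derivative:
  assumes "x\<^sup>2 + y\<^sup>2 < 1"
  shows "(slice_area y has_real_derivative klein_area_density (x, y)) (at x)"
proof -
  define a where "a = 1 - y\<^sup>2"
  define s where "s = sqrt (a - x\<^sup>2)"
  have t: "0 < a - x\<^sup>2"
    using assms by (simp add: a_def)
  then have s: "0 < s" "s * s = a - x\<^sup>2"
    by (auto simp: s_def)
  have a: "0 < a"
    using assms unfolding a_def by (smt (verit) zero_le_power2)
  have "((\<lambda>X. sqrt (a - X\<^sup>2)) has_real_derivative - x / s) (at x)"
    using t by (auto intro!: derivative_eq_intros simp: s_def field_simps)
  then have "((\<lambda>X. X / (a * sqrt (a - X\<^sup>2))) has_real_derivative
      (1 * (a * s) - x * (a * (- x / s))) / ((a * s) * (a * s))) (at x)"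
    using a s unfolding s_def by (intro DERIV_divide DERIV_cmult DERIV_ident) auto
  moreover have "(1 * (a * s) - x * (a * (- x / s))) / ((a * s) * (a * s)) = 1 / ((a - x\<^sup>2) * s)"
  proof -
    have "1 * (a * s) - x * (a * (- x / s)) = a * (s * s + x\<^sup>2) / s"
      using s(1) by (simp add: field_simps power2_eq_square)
    also have "\<dots> = a * a / s"
      using s(2) by simp
    finally show ?thesis
      unfolding s(2)[symmetric] using a s(1) by (simp add: field_simps)
  qed
  ultimately show ?thesis
    unfolding slice_area_def[abs_def] klein_area_density_Pair[OF assms] by (simp add: a_def s_def)
qed

lemma klein_area_density_nonneg: "0 \<le> klein_area_density z"
  by (simp add: klein_area_density_def)

lemma borel_measurable_klein_area_density [measurable]:
  "klein_area_density \<in> borel_measurable borel"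
  unfolding klein_area_density_def by measurable

lemma nn_integral_klein_area_density_segment:
  assumes "0 \<le> X" "X\<^sup>2 + y\<^sup>2 < 1"
  shows "(\<integral>\<^sup>+x. indicator {0..X} x * ennreal (klein_area_density (x, y)) \<partial>lborel)
    = ennreal (slice_area y X)"
proof -
  have "(\<integral>\<^sup>+x. ennreal (klein_area_density (x, y)) * indicator {0..X} x \<partial>lborel)
      = slice_area y X - slice_area y 0"
  proof (rule nn_integral_FTC_Icc)
    fix x assume "x \<in> {0..X}"
    then have "x\<^sup>2 \<le> X\<^sup>2"
      by (auto intro: power_mono)
    then have "x\<^sup>2 + y\<^sup>2 < 1"
      using assms by linarith
    then show "(slice_area y has_real_derivative klein_area_density (x, y)) (at x)"
      by (rule slice_area_has_derivative)
  qed (use assms in \<open>auto simp: klein_area_density_nonneg\<close>)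
  then show ?thesis
    by (simp add: mult.commute slice_area_def)
qed

lemma hyp_area_by_horizontal_slices:
  fixes S :: "(real \<times> real) set" and a b :: real and X :: "real \<Rightarrow> real"
  assumes [measurable]: "S \<in> sets borel" and "S \<subseteq> klein_disc"
    and slice: "\<And>x y. a < y \<Longrightarrow> y < b \<Longrightarrow> (x, y) \<in> S \<longleftrightarrow> 0 \<le> x \<and> x \<le> X y"
    and strip: "\<And>x y. (x, y) \<in> S \<Longrightarrow> a \<le> y \<and> y \<le> b"
    and X_nonneg: "\<And>y. a < y \<Longrightarrow> y < b \<Longrightarrow> 0 \<le> X y"
  shows "hyp_area S = (\<integral>\<^sup>+y. indicator {a<..<b} y * ennreal (slice_area y (X y)) \<partial>lborel)"
proof -
  have disc: "(X y)\<^sup>2 + y\<^sup>2 < 1" if "a < y" "y < b" for y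
    using slice[OF that, of "X y"] X_nonneg[OF that] \<open>S \<subseteq> klein_disc\<close>
    by (auto simp: klein_disc_def norm_Pair dist_norm)
  have "hyp_area S = (\<integral>\<^sup>+z. indicator S z * ennreal (klein_area_density z) \<partial>(lborel \<Otimes>\<^sub>M lborel))"
    using \<open>S \<subseteq> klein_disc\<close> by (simp add: hyp_area_def Int_absorb2 lborel_prod)
  also have "\<dots> = (\<integral>\<^sup>+y. \<integral>\<^sup>+x. indicator S (x, y) * ennreal (klein_area_density (x, y)) \<partial>lborel \<partial>lborel)"
    by (rule lborel_pair.nn_integral_snd[symmetric]) (simp add: lborel_prod)
  also have "\<dots> = (\<integral>\<^sup>+y. indicator {a<..<b} y * ennreal (slice_area y (X y)) \<partial>lborel)"
  proof (rule nn_integral_cong_AE)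
    show "AE y in lborel. (\<integral>\<^sup>+x. indicator S (x, y) * ennreal (klein_area_density (x, y)) \<partial>lborel)
        = indicator {a<..<b} y * ennreal (slice_area y (X y))"
      using AE_lborel_singleton[of a] AE_lborel_singleton[of b]
    proof eventually_elim
      case (elim y)
      show ?case
      proof (cases "a < y \<and> y < b")
        case True
        then have "(\<integral>\<^sup>+x. indicator S (x, y) * ennreal (klein_area_density (x, y)) \<partial>lborel)
            = (\<integral>\<^sup>+x. indicator {0..X y} x * ennreal (klein_area_density (x, y)) \<partial>lborel)"
          using slice by (intro nn_integral_cong) (auto split: split_indicator)
        then show ?thesis
          using True X_nonneg disc by (simp add: nn_integral_klein_area_density_segment)
      next
        case False
        then have "(x, y) \<notin> S" for x
          using strip elim by fastforce
        then show ?thesis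
          using False by simp
      qed
    qed
  qed
  finally show ?thesis .
qed

lemma hyp_area_mono: "S \<subseteq> T \<Longrightarrow> hyp_area S \<le> hyp_area T"
  unfolding hyp_area_def by (intro nn_integral_mono) (auto split: split_indicator)

definition line_primitive :: "real \<Rightarrow> real \<Rightarrow> real \<Rightarrow> real" where
  "line_primitive p q y = arctan ((p * y - q) / sqrt (1 - y\<^sup>2 - (p - q * y)\<^sup>2))"

lemma line_primitive_has_derivative:
  assumes "(p - q * y)\<^sup>2 + y\<^sup>2 < 1"
  shows "(line_primitive p q has_real_derivative slice_area y (p - q * y)) (at y)"
proof -
  define s where "s = sqrt (1 - y\<^sup>2 - (p - q * y)\<^sup>2)"
  define K where "K = 1 - p\<^sup>2 + q\<^sup>2"
  have s: "0 < s" "s * s = 1 - y\<^sup>2 - (p - q * y)\<^sup>2"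
    using assms by (auto simp: s_def)
  have y: "0 < 1 - y\<^sup>2"
    using assms by (smt (verit) zero_le_power2)
  have sum_sq: "s * s + (p * y - q)\<^sup>2 = (1 - y\<^sup>2) * K"
    unfolding s(2) K_def by (simp add: algebra_simps power2_eq_square)
  have K: "0 < K"
    using sum_sq s(1) y by (smt (verit) mult_nonneg_nonpos zero_le_power2 mult_pos_pos)
  have numerator: "p * (s * s) - (p * y - q) * (q * (p - q * y) - y) = (p - q * y) * K"
    unfolding s(2) K_def by (simp add: algebra_simps power2_eq_square)
  have "((\<lambda>y. sqrt (1 - y\<^sup>2 - (p - q * y)\<^sup>2)) has_real_derivative (q * (p - q * y) - y) / s) (at y)"
    using s by (auto intro!: derivative_eq_intros simp: s_def field_simps)
  then have "((\<lambda>y. (p * y - q) / sqrt (1 - y\<^sup>2 - (p - q * y)\<^sup>2)) has_real_derivative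
      (p * s - (p * y - q) * ((q * (p - q * y) - y) / s)) / (s * s)) (at y)"
    unfolding s_def using s(1)
    by (intro DERIV_divide) (auto intro!: derivative_eq_intros simp: s_def)
  from DERIV_chain2[OF DERIV_arctan this]
  have "(line_primitive p q has_real_derivative
      inverse (1 + ((p * y - q) / s)\<^sup>2) * ((p * s - (p * y - q) * ((q * (p - q * y) - y) / s)) / (s * s))) (at y)"
    unfolding line_primitive_def[abs_def] s_def .
  moreover have "inverse (1 + ((p * y - q) / s)\<^sup>2) = s * s / ((1 - y\<^sup>2) * K)"
  proof -
    have "1 + ((p * y - q) / s)\<^sup>2 = (s * s + (p * y - q)\<^sup>2) / (s * s)"
      using s(1) by (simp add: field_simps power2_eq_square)
    then show ?thesis
      by (simp add: sum_sq)
  qed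
  moreover have "(p * s - (p * y - q) * ((q * (p - q * y) - y) / s)) / (s * s)
      = (p - q * y) * K / (s * (s * s))"
    unfolding numerator[symmetric] using s(1) by (simp add: field_simps)
  moreover have "s * s / ((1 - y\<^sup>2) * K) * ((p - q * y) * K / (s * (s * s))) = slice_area y (p - q * y)"
    unfolding slice_area_def s_def[symmetric] using s(1) y K by (simp add: field_simps)
  ultimately show ?thesis
    by (simp only:)
qed

lemma nn_integral_slice_area_line:
  assumes "a < b"
    and disc: "\<And>y. a < y \<Longrightarrow> y < b \<Longrightarrow> (p - q * y)\<^sup>2 + y\<^sup>2 < 1"
    and nonneg: "\<And>y. a < y \<Longrightarrow> y < b \<Longrightarrow> 0 \<le> p - q * y"
    and "(line_primitive p q \<longlongrightarrow> A) (at_right a)"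
    and "(line_primitive p q \<longlongrightarrow> B) (at_left b)"
  shows "(\<integral>\<^sup>+y. indicator {a<..<b} y * ennreal (slice_area y (p - q * y)) \<partial>lborel) = ennreal (B - A)"
proof (rule nn_integral_open_interval_FTC)
  fix y assume "a < y" "y < b"
  note y = disc[OF this] nonneg[OF this]
  show "(line_primitive p q has_real_derivative slice_area y (p - q * y)) (at y)"
    using y(1) by (rule line_primitive_has_derivative)
  have "0 < 1 - y\<^sup>2" "0 < 1 - y\<^sup>2 - (p - q * y)\<^sup>2"
    using y by (smt (verit) zero_le_power2)+
  then show "isCont (\<lambda>y. slice_area y (p - q * y)) y" "0 \<le> slice_area y (p - q * y)"
    using y unfolding slice_area_def by (auto intro!: continuous_intros)
qed (use assms in simp_all)

lemma line_primitive_tendsto_one_sided: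
  assumes "(p - q * y)\<^sup>2 + y\<^sup>2 < 1"
  shows "(line_primitive p q \<longlongrightarrow> line_primitive p q y) (at_left y)"
    and "(line_primitive p q \<longlongrightarrow> line_primitive p q y) (at_right y)"
  using DERIV_isCont[OF line_primitive_has_derivative[OF assms]]
  by (simp_all add: isCont_def filterlim_at_split)

lemma tendsto_arctan_div_sqrt_vanishing:
  fixes N D :: "'a \<Rightarrow> real"
  assumes "(N \<longlongrightarrow> n) F" "n \<noteq> 0" "(D \<longlongrightarrow> 0) F" "eventually (\<lambda>y. 0 < D y) F"
  shows "((\<lambda>y. arctan (N y / sqrt (D y))) \<longlongrightarrow> sgn n * (pi/2)) F"
proof -
  have "((\<lambda>y. sqrt (D y)) \<longlongrightarrow> 0) F"
    using tendsto_real_sqrt[OF assms(3)] by simp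
  moreover have "eventually (\<lambda>y. 0 < sqrt (D y)) F"
    using assms(4) by (rule eventually_mono) simp
  ultimately have "filterlim (\<lambda>y. sqrt (D y)) (at_right 0) F"
    by (rule tendsto_imp_filterlim_at_right)
  then have inv: "filterlim (\<lambda>y. inverse (sqrt (D y))) at_top F"
    by (rule filterlim_compose[OF filterlim_inverse_at_top_right])
  show ?thesis
  proof (cases "0 < n")
    case True
    have "filterlim (\<lambda>y. N y * inverse (sqrt (D y))) at_top F"
      by (rule filterlim_tendsto_pos_mult_at_top[OF assms(1) True inv])
    then have "((\<lambda>y. arctan (N y * inverse (sqrt (D y)))) \<longlongrightarrow> pi/2) F"
      by (rule filterlim_compose[OF tendsto_arctan_at_top])
    then show ?thesis
      using True by (simp only: divide_inverse sgn_pos mult_1)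
  next
    case False
    then have "n < 0"
      using assms(2) by simp
    have "filterlim (\<lambda>y. N y * inverse (sqrt (D y))) at_bot F"
      by (rule filterlim_tendsto_neg_mult_at_bot[OF assms(1) \<open>n < 0\<close> inv])
    then have "((\<lambda>y. arctan (N y * inverse (sqrt (D y)))) \<longlongrightarrow> - (pi/2)) F"
      by (rule filterlim_compose[OF tendsto_arctan_at_bot])
    then show ?thesis
      using \<open>n < 0\<close> by (simp only: divide_inverse sgn_neg mult_minus_left mult_1)
  qed
qed

text \<open>The line \<open>x = p - p y\<close> runs into the ideal point \<open>(0, 1)\<close>, where numerator and radicand
  both vanish; a factor \<open>\<surd>(1 - y)\<close> cancels.\<close>

lemma line_primitive_tendsto_at_left_one: "(line_primitive p p \<longlongrightarrow> 0) (at_left 1)"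
proof -
  define B where "B y = 1 + y - p\<^sup>2 * (1 - y)" for y :: real
  have B: "(B \<longlongrightarrow> B 1) (at_left 1)"
    unfolding B_def by (intro tendsto_intros)
  moreover have "0 < B 1"
    by (simp add: B_def)
  ultimately have "eventually (\<lambda>y. 0 < B y) (at_left 1)"
    by (rule order_tendstoD)
  moreover have "eventually (\<lambda>y. y < 1) (at_left (1::real))"
    by (simp add: eventually_at_filter)
  ultimately have "eventually (\<lambda>y. line_primitive p p y = arctan (- p * sqrt (1 - y) / sqrt (B y))) (at_left 1)"
  proof eventually_elim
    case (elim y)
    have "sqrt (1 - y\<^sup>2 - (p - p * y)\<^sup>2) = sqrt (1 - y) * sqrt (B y)"
      by (simp add: B_def algebra_simps power2_eq_square flip: real_sqrt_mult)
    moreover have "p * y - p = - p * sqrt (1 - y) * sqrt (1 - y)"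
      using elim by (simp add: algebra_simps)
    moreover have "0 < sqrt (1 - y)"
      using elim by simp
    ultimately show ?case
      by (simp add: line_primitive_def)
  qed
  moreover have "((\<lambda>y. arctan (- p * sqrt (1 - y) / sqrt (B y))) \<longlongrightarrow> arctan (- p * sqrt (1 - 1) / sqrt (B 1))) (at_left 1)"
    using \<open>0 < B 1\<close> by (intro tendsto_intros B) auto
  ultimately show ?thesis
    by (simp add: tendsto_cong)
qed

section \<open>The orthoscheme\<close>

lemma convex_hull_right_triangle:
  fixes r h :: real
  assumes "0 < r" "0 < h"
  shows "(x, y) \<in> convex hull {(r, 0), (0, 0), (0, h)} \<longleftrightarrow> 0 \<le> x \<and> 0 \<le> y \<and> x / r + y / h \<le> 1"
proof -
  have "(x, y) \<in> convex hull {(r, 0), (0, 0), (0, h)} \<longleftrightarrow>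
      (\<exists>u v w. 0 \<le> u \<and> 0 \<le> v \<and> 0 \<le> w \<and> u + v + w = 1 \<and> x = u * r \<and> y = w * h)"
    unfolding convex_hull_3 by auto
  also have "\<dots> \<longleftrightarrow> 0 \<le> x \<and> 0 \<le> y \<and> x / r + y / h \<le> 1"
  proof
    assume "0 \<le> x \<and> 0 \<le> y \<and> x / r + y / h \<le> 1"
    then show "\<exists>u v w. 0 \<le> u \<and> 0 \<le> v \<and> 0 \<le> w \<and> u + v + w = 1 \<and> x = u * r \<and> y = w * h"
      using assms by (intro exI[of _ "x / r"] exI[of _ "1 - x / r - y / h"] exI[of _ "y / h"]) auto
  qed (use assms in auto)
  finally show ?thesis .
qed

lemma mem_orthoscheme:
  fixes r h :: real
  assumes "0 < r" "0 < h"
  shows "(x, y) \<in> orthoscheme r h \<longleftrightarrow>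
    0 \<le> x \<and> 0 \<le> y \<and> x / r + y / h \<le> 1 \<and> x\<^sup>2 + y\<^sup>2 < 1 \<and>
    (1 < r \<longrightarrow> x * r \<le> 1) \<and> (1 < h \<longrightarrow> y * h \<le> 1)"
  using assms
  by (auto simp: orthoscheme_def truncate_at_def ultraideal_def polar_halfplane_def klein_disc_def
      convex_hull_right_triangle norm_Pair dist_norm inner_Pair)

lemma orthoscheme_subset_klein_disc: "orthoscheme r h \<subseteq> klein_disc"
  by (auto simp: orthoscheme_def truncate_at_def)

lemma orthoscheme_borel [measurable]: "orthoscheme r h \<in> sets borel"
proof -
  have "closed (polar_halfplane v)" for v
    unfolding polar_halfplane_def by (intro closed_Collect_le continuous_intros)
  moreover have "closed (convex hull {(r, 0), (0, 0), (0, h)})"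
    by (intro compact_imp_closed compact_convex_hull finite_imp_compact) simp
  ultimately show ?thesis
    by (auto simp: orthoscheme_def truncate_at_def klein_disc_def)
qed

text \<open>At height \<open>y\<close> the orthoscheme is bounded by the hypotenuse \<open>x/r + y/h = 1\<close> and, when
  \<open>P\<^sub>0\<close> is ultraideal, by its polar line \<open>x = 1/r\<close>; its top is \<open>y = h\<close> or, when \<open>P\<^sub>2\<close> is
  ultraideal, the polar line \<open>y = 1/h\<close>. Both minima select the right bound automatically.\<close>

definition orthoscheme_width :: "real \<Rightarrow> real \<Rightarrow> real \<Rightarrow> real" where
  "orthoscheme_width r h y = min (1 / r) (r - r / h * y)"

definition orthoscheme_height :: "real \<Rightarrow> real" where
  "orthoscheme_height h = min h (1 / h)"

lemma orthoscheme_height_le_one: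
  assumes "0 < h" "h \<le> 1"
  shows "orthoscheme_height h = h"
proof -
  have "h * h \<le> 1"
    using assms by (intro mult_le_one) auto
  then show ?thesis
    using assms by (simp add: orthoscheme_height_def min_def field_simps)
qed

lemma orthoscheme_height_ge_one:
  assumes "1 \<le> h"
  shows "orthoscheme_height h = 1 / h"
proof -
  have "1 * 1 \<le> h * h"
    using assms by (intro mult_mono) auto
  then show ?thesis
    using assms by (simp add: orthoscheme_height_def min_def field_simps)
qed

text \<open>The two upper bounds on \<open>x\<close> multiply to \<open>x\<^sup>2 \<le> 1 - u\<close>.\<close>

lemma sum_squares_lt_one_of_bounds:
  fixes r u x y :: real
  assumes "0 < r" "0 \<le> x" "x * r \<le> 1" "x \<le> r * (1 - u)" "y\<^sup>2 < u"
  shows "x\<^sup>2 + y\<^sup>2 < 1"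
proof -
  have "0 \<le> 1 - u"
    using assms by (smt (verit) mult_pos_neg)
  have "x\<^sup>2 \<le> x * (r * (1 - u))"
    unfolding power2_eq_square using assms by (intro mult_left_mono) auto
  also have "\<dots> = (x * r) * (1 - u)"
    by simp
  also have "\<dots> \<le> 1 - u"
    using assms \<open>0 \<le> 1 - u\<close> by (intro mult_left_le_one_le) auto
  finally show ?thesis
    using assms by linarith
qed

lemma orthoscheme_width_in_disc:
  assumes "0 < r" "0 < h" "0 < y" "y < orthoscheme_height h"
  shows "0 \<le> orthoscheme_width r h y" "(orthoscheme_width r h y)\<^sup>2 + y\<^sup>2 < 1"
proof -
  have "y < h" "y < 1 / h"
    using assms by (auto simp: orthoscheme_height_def)
  then show nonneg: "0 \<le> orthoscheme_width r h y"
    using assms by (simp add: orthoscheme_width_def field_simps)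
  have "y\<^sup>2 < y / h"
    using \<open>y < 1 / h\<close> assms by (simp add: power2_eq_square field_simps)
  moreover have "orthoscheme_width r h y * r \<le> 1"
    using assms by (simp add: orthoscheme_width_def min_def field_simps)
  moreover have "orthoscheme_width r h y \<le> r * (1 - y / h)"
    by (simp add: orthoscheme_width_def algebra_simps)
  ultimately show "(orthoscheme_width r h y)\<^sup>2 + y\<^sup>2 < 1"
    using nonneg assms(1) by (intro sum_squares_lt_one_of_bounds) auto
qed

lemma hyp_area_orthoscheme:
  assumes "0 < r" "0 < h"
  shows "hyp_area (orthoscheme r h) =
    (\<integral>\<^sup>+y. indicator {0<..<orthoscheme_height h} y * ennreal (slice_area y (orthoscheme_width r h y)) \<partial>lborel)"
proof (rule hyp_area_by_horizontal_slices[OF orthoscheme_borel orthoscheme_subset_klein_disc])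
  fix x y assume y: "0 < y" "y < orthoscheme_height h"
  then have "y * h \<le> 1"
    using assms by (simp add: orthoscheme_height_def field_simps)
  show "(x, y) \<in> orthoscheme r h \<longleftrightarrow> 0 \<le> x \<and> x \<le> orthoscheme_width r h y"
  proof
    assume "(x, y) \<in> orthoscheme r h"
    then have x: "0 \<le> x" "x / r + y / h \<le> 1" "1 < r \<longrightarrow> x * r \<le> 1"
      using assms by (simp_all add: mem_orthoscheme)
    then have "x \<le> r - r / h * y"
      using assms by (simp add: field_simps)
    moreover have "x \<le> 1 / r"
    proof (cases "1 < r")
      case False
      then have "r \<le> 1 / r"
        using assms by (simp add: field_simps power2_eq_square mult_le_one)
      moreover have "r - r / h * y \<le> r"
        using assms y by simp
      ultimately show ?thesis
        using \<open>x \<le> r - r / h * y\<close> by linarith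
    qed (use x assms in \<open>simp add: field_simps\<close>)
    ultimately show "0 \<le> x \<and> x \<le> orthoscheme_width r h y"
      using x by (simp add: orthoscheme_width_def)
  next
    assume x: "0 \<le> x \<and> x \<le> orthoscheme_width r h y"
    have "x\<^sup>2 \<le> (orthoscheme_width r h y)\<^sup>2"
      using x by (intro power_mono) auto
    then have "x\<^sup>2 + y\<^sup>2 < 1"
      using orthoscheme_width_in_disc[OF assms y] by linarith
    with x y \<open>y * h \<le> 1\<close> show "(x, y) \<in> orthoscheme r h"
      using assms by (auto simp: mem_orthoscheme orthoscheme_width_def field_simps)
  qed
next
  fix x y assume "(x, y) \<in> orthoscheme r h"
  then have y: "0 \<le> y" "x / r + y / h \<le> 1" "1 < h \<longrightarrow> y * h \<le> 1" and "0 \<le> x"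
    using assms by (simp_all add: mem_orthoscheme)
  then have "y / h \<le> 1"
    using assms by (smt (verit) divide_nonneg_pos)
  then have "y \<le> h"
    using assms by (simp add: field_simps)
  moreover have "y \<le> 1 / h"
  proof (cases "1 < h")
    case False
    then have "h \<le> 1 / h"
      using assms by (simp add: field_simps power2_eq_square mult_le_one)
    then show ?thesis
      using \<open>y \<le> h\<close> by linarith
  qed (use y assms in \<open>simp add: field_simps\<close>)
  ultimately show "0 \<le> y \<and> y \<le> orthoscheme_height h"
    using y by (simp add: orthoscheme_height_def)
qed (use orthoscheme_width_in_disc[OF assms] in auto)

section \<open>The area in closed form\<close>

lemma line_primitive_at_zero: "line_primitive p q 0 = - arctan (q / sqrt (1 - p\<^sup>2))"
  by (simp add: line_primitive_def arctan_minus)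

lemma line_primitive_tendsto_polar_P2:
  assumes "0 < r" "1 \<le> h" "h = 1 \<or> r\<^sup>2 * (1 - 1 / h\<^sup>2) < 1"
  shows "(line_primitive r (r / h) \<longlongrightarrow> 0) (at_left (1 / h))"
proof (cases "h = 1")
  case True
  then show ?thesis
    using line_primitive_tendsto_at_left_one[of r] by simp
next
  case False
  define c where "c = 1 - 1 / h\<^sup>2"
  have c: "0 < c" "c < 1" "r\<^sup>2 * c < 1"
    using assms False by (auto simp: c_def field_simps)
  have "r - r / h * (1 / h) = r * c" "(1 / h)\<^sup>2 = 1 - c"
    using assms by (simp_all add: c_def field_simps power2_eq_square)
  then have "(r - r / h * (1 / h))\<^sup>2 + (1 / h)\<^sup>2 = c * (r\<^sup>2 * c) + (1 - c)"
    by (simp add: power2_eq_square)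
  also have "\<dots> < c * 1 + (1 - c)"
    using c by (intro add_strict_right_mono mult_strict_left_mono) auto
  finally have "(line_primitive r (r / h) \<longlongrightarrow> line_primitive r (r / h) (1 / h)) (at_left (1 / h))"
    by (intro line_primitive_tendsto_one_sided) simp
  then show ?thesis
    by (simp add: line_primitive_def)
qed

lemma hyp_area_orthoscheme_P0_not_ultraideal:
  assumes "0 < r" "r \<le> 1" "0 < h"
    and "(line_primitive r (r / h) \<longlongrightarrow> A) (at_right 0)"
    and "(line_primitive r (r / h) \<longlongrightarrow> B) (at_left (orthoscheme_height h))"
  shows "hyp_area (orthoscheme r h) = ennreal (B - A)"
proof -
  have width: "orthoscheme_width r h y = r - r / h * y" if "0 \<le> y" for y
  proof -
    have "r \<le> 1 / r"
      using assms by (simp add: field_simps power2_eq_square mult_le_one)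
    moreover have "r - r / h * y \<le> r"
      using assms that by simp
    ultimately show ?thesis
      unfolding orthoscheme_width_def by (simp add: min.absorb2)
  qed
  have "hyp_area (orthoscheme r h) =
      (\<integral>\<^sup>+y. indicator {0<..<orthoscheme_height h} y * ennreal (slice_area y (r - r / h * y)) \<partial>lborel)"
    unfolding hyp_area_orthoscheme[OF assms(1,3)]
    by (intro nn_integral_cong) (auto simp: width split: split_indicator)
  also have "\<dots> = ennreal (B - A)"
  proof (rule nn_integral_slice_area_line)
    show "0 < orthoscheme_height h"
      using assms by (simp add: orthoscheme_height_def)
  next
    fix y assume "0 < y" "y < orthoscheme_height h"
    then show "(r - r / h * y)\<^sup>2 + y\<^sup>2 < 1" "0 \<le> r - r / h * y"
      using orthoscheme_width_in_disc[OF assms(1,3)] width by auto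
  qed (use assms in auto)
  finally show ?thesis .
qed

lemma hyp_area_orthoscheme_both_proper:
  assumes "0 < r" "r < 1" "0 < h" "h < 1"
  shows "hyp_area (orthoscheme r h) =
    ennreal (arctan (r / (h * sqrt (1 - r\<^sup>2))) - arctan (r * sqrt (1 - h\<^sup>2) / h))"
proof -
  have "line_primitive r (r / h) h = - arctan (r * sqrt (1 - h\<^sup>2) / h)"
  proof -
    define s where "s = sqrt (1 - h\<^sup>2)"
    have "0 < 1 - h\<^sup>2"
      using assms by (simp add: power_less_one_iff)
    then have s: "0 < s" "s * s = 1 - h\<^sup>2"
      by (auto simp: s_def)
    have "sqrt (1 - h\<^sup>2 - (r - r / h * h)\<^sup>2) = s"
      using assms by (simp add: s_def)
    moreover have "r * h - r / h = - (r * (s * s) / h)"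
      unfolding s(2) using assms by (simp add: field_simps power2_eq_square)
    ultimately have "(r * h - r / h) / sqrt (1 - h\<^sup>2 - (r - r / h * h)\<^sup>2) = - (r * s / h)"
      using s(1) by simp
    then show ?thesis
      by (simp add: line_primitive_def arctan_minus s_def)
  qed
  moreover have "(line_primitive r (r / h) \<longlongrightarrow> line_primitive r (r / h) 0) (at_right 0)"
    using assms by (intro line_primitive_tendsto_one_sided) (simp add: power_less_one_iff)
  moreover have "(line_primitive r (r / h) \<longlongrightarrow> line_primitive r (r / h) h) (at_left (orthoscheme_height h))"
    using assms by (auto simp: orthoscheme_height_le_one power_less_one_iff intro!: line_primitive_tendsto_one_sided)
  ultimately show ?thesis
    using assms by (simp add: hyp_area_orthoscheme_P0_not_ultraideal line_primitive_at_zero divide_divide_eq_left)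
qed

lemma hyp_area_orthoscheme_P0_proper:
  assumes "0 < r" "r < 1" "1 \<le> h"
  shows "hyp_area (orthoscheme r h) = ennreal (arctan (r / (h * sqrt (1 - r\<^sup>2))))"
proof -
  have "r\<^sup>2 * (1 - 1 / h\<^sup>2) \<le> r\<^sup>2 * 1"
    using assms by (intro mult_left_mono) auto
  moreover have "r\<^sup>2 < 1"
    using assms by (simp add: power_less_one_iff)
  ultimately have "r\<^sup>2 * (1 - 1 / h\<^sup>2) < 1"
    by linarith
  then have "(line_primitive r (r / h) \<longlongrightarrow> 0) (at_left (orthoscheme_height h))"
    using assms line_primitive_tendsto_polar_P2[of r h] by (simp add: orthoscheme_height_ge_one)
  moreover have "(line_primitive r (r / h) \<longlongrightarrow> line_primitive r (r / h) 0) (at_right 0)"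
    using \<open>r\<^sup>2 < 1\<close> by (intro line_primitive_tendsto_one_sided) simp
  ultimately show ?thesis
    using assms by (simp add: hyp_area_orthoscheme_P0_not_ultraideal line_primitive_at_zero divide_divide_eq_left)
qed

lemma hyp_area_orthoscheme_P0_ideal:
  assumes "1 \<le> h"
  shows "hyp_area (orthoscheme 1 h) = ennreal (pi / 2)"
proof -
  have "(line_primitive 1 (1 / h) \<longlongrightarrow> sgn (- 1 / h) * (pi / 2)) (at_right 0)"
    unfolding line_primitive_def
  proof (rule tendsto_arctan_div_sqrt_vanishing)
    have "eventually (\<lambda>y. 0 < y \<and> y < orthoscheme_height h) (at_right 0)"
      unfolding eventually_at_right_field
      using assms by (intro exI[of _ "1 / h"]) (auto simp: orthoscheme_height_ge_one)
    then show "eventually (\<lambda>y. 0 < 1 - y\<^sup>2 - (1 - 1 / h * y)\<^sup>2) (at_right 0)"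
    proof (rule eventually_mono)
      fix y assume "0 < y \<and> y < orthoscheme_height h"
      then show "0 < 1 - y\<^sup>2 - (1 - 1 / h * y)\<^sup>2"
        using orthoscheme_width_in_disc[of 1 h y] assms
        by (simp add: orthoscheme_width_def min_def field_simps)
    qed
  next
    show "((\<lambda>y. 1 * y - 1 / h) \<longlongrightarrow> - 1 / h) (at_right 0)"
      using assms by (auto intro!: tendsto_eq_intros)
    show "((\<lambda>y. 1 - y\<^sup>2 - (1 - 1 / h * y)\<^sup>2) \<longlongrightarrow> 0) (at_right 0)"
      using assms by (auto intro!: tendsto_eq_intros)
  qed (use assms in simp)
  moreover have "(line_primitive 1 (1 / h) \<longlongrightarrow> 0) (at_left (orthoscheme_height h))"
    using assms line_primitive_tendsto_polar_P2[of 1 h] by (simp add: orthoscheme_height_ge_one)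
  ultimately show ?thesis
    using assms hyp_area_orthoscheme_P0_not_ultraideal[of 1 h] by simp
qed

lemma orthoscheme_width_P0_ultraideal:
  assumes "1 < r" "0 < h"
  shows "orthoscheme_width r h y = (if y \<le> h * (1 - 1 / r\<^sup>2) then 1 / r else r - r / h * y)"
proof -
  have "1 / r \<le> r - r / h * y \<longleftrightarrow> y \<le> h * (1 - 1 / r\<^sup>2)"
    using assms by (simp add: field_simps power2_eq_square)
  then show ?thesis
    by (auto simp: orthoscheme_width_def min_def)
qed

text \<open>\<open>m\<close> is the height where the polar line \<open>x = 1/r\<close> of \<open>P\<^sub>0\<close> meets the hypotenuse.\<close>

lemma hyp_area_orthoscheme_split_at_polar_P0:
  assumes "1 < r" "1 \<le> h" "m = h * (1 - 1 / r\<^sup>2)" "m \<le> 1 / h"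
  shows "hyp_area (orthoscheme r h) =
    (\<integral>\<^sup>+y. indicator {0<..<m} y * ennreal (slice_area y (1 / r - 0 * y)) \<partial>lborel) +
    (\<integral>\<^sup>+y. indicator {m<..<1 / h} y * ennreal (slice_area y (r - r / h * y)) \<partial>lborel)"
proof -
  have "1 < r\<^sup>2"
    using assms by (simp add: one_less_power)
  then have "0 < m"
    using assms by simp
  have "hyp_area (orthoscheme r h) =
      (\<integral>\<^sup>+y. indicator {0<..<1 / h} y * ennreal (slice_area y (orthoscheme_width r h y)) \<partial>lborel)"
    using assms by (simp add: hyp_area_orthoscheme orthoscheme_height_ge_one)
  also have "\<dots> = (\<integral>\<^sup>+y. indicator {0<..<m} y * ennreal (slice_area y (orthoscheme_width r h y)) \<partial>lborel) +
      (\<integral>\<^sup>+y. indicator {m<..<1 / h} y * ennreal (slice_area y (orthoscheme_width r h y)) \<partial>lborel)"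
    using \<open>0 < m\<close> assms(4)
    by (intro nn_integral_interval_split) (auto simp: slice_area_def orthoscheme_width_def)
  also have "(\<integral>\<^sup>+y. indicator {0<..<m} y * ennreal (slice_area y (orthoscheme_width r h y)) \<partial>lborel) =
      (\<integral>\<^sup>+y. indicator {0<..<m} y * ennreal (slice_area y (1 / r - 0 * y)) \<partial>lborel)"
    using assms by (intro nn_integral_cong) (auto simp: orthoscheme_width_P0_ultraideal split: split_indicator)
  also have "(\<integral>\<^sup>+y. indicator {m<..<1 / h} y * ennreal (slice_area y (orthoscheme_width r h y)) \<partial>lborel) =
      (\<integral>\<^sup>+y. indicator {m<..<1 / h} y * ennreal (slice_area y (r - r / h * y)) \<partial>lborel)"
    using assms by (intro nn_integral_cong) (auto simp: orthoscheme_width_P0_ultraideal split: split_indicator)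
  finally show ?thesis .
qed

lemma orthoscheme_P0_ultraideal_slices_in_disc:
  fixes r h m :: real
  assumes "1 < r" "1 \<le> h" "m = h * (1 - 1 / r\<^sup>2)" "m \<le> 1 / h"
  shows "\<And>y. 0 < y \<Longrightarrow> y < m \<Longrightarrow> (1 / r - 0 * y)\<^sup>2 + y\<^sup>2 < 1"
    and "\<And>y. m < y \<Longrightarrow> y < 1 / h \<Longrightarrow> (r - r / h * y)\<^sup>2 + y\<^sup>2 < 1 \<and> 0 \<le> r - r / h * y"
proof -
  have h: "0 < h" "orthoscheme_height h = 1 / h"
    using assms by (simp_all add: orthoscheme_height_ge_one)
  show "(1 / r - 0 * y)\<^sup>2 + y\<^sup>2 < 1" if "0 < y" "y < m" for y
    using that assms orthoscheme_width_in_disc[of r h y] h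
    by (simp add: orthoscheme_width_P0_ultraideal)
  show "(r - r / h * y)\<^sup>2 + y\<^sup>2 < 1 \<and> 0 \<le> r - r / h * y" if "m < y" "y < 1 / h" for y
  proof -
    have "0 < m"
      using assms by (simp add: one_less_power)
    then have "0 < y"
      using that by linarith
    then show ?thesis
      using that assms orthoscheme_width_in_disc[of r h y] h
      by (simp add: orthoscheme_width_P0_ultraideal)
  qed
qed

lemma line_primitives_at_polar_P0_corner:
  assumes "1 < r" "0 < h" "m = h * (1 - 1 / r\<^sup>2)" "m \<le> 1 / h" "(1 / r)\<^sup>2 + m\<^sup>2 < 1"
  shows "0 \<le> line_primitive (1 / r) 0 m" "line_primitive r (r / h) m \<le> 0"
    and "line_primitive (1 / r) 0 m - line_primitive r (r / h) m = pi / 2"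
proof -
  define s where "s = sqrt (1 - m\<^sup>2 - (1 / r)\<^sup>2)"
  have s: "0 < s" "s * s = 1 - m\<^sup>2 - (1 / r)\<^sup>2"
    using assms(5) by (auto simp: s_def)
  have "0 < m"
    using assms by (simp add: one_less_power)
  define a where "a = m / r / s"
  have "0 < a"
    using \<open>0 < m\<close> assms(1) s by (simp add: a_def)
  have lower: "line_primitive (1 / r) 0 m = arctan a"
    by (simp add: line_primitive_def a_def s_def)
  have "r - r / h * m = 1 / r"
    using assms by (simp add: field_simps power2_eq_square)
  then have "line_primitive r (r / h) m = arctan ((r * m - r / h) / s)"
    by (simp only: line_primitive_def s_def)
  also have "(r * m - r / h) / s = - (1 / a)"
  proof -
    have "m / r * (r / h - r * m) = m / h - m\<^sup>2"
      using assms by (simp add: field_simps power2_eq_square)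
    also have "\<dots> = s * s"
      using assms unfolding s(2) by (simp add: power_divide field_simps)
    finally show ?thesis
      using s(1) assms(1) \<open>0 < m\<close> by (simp add: a_def field_simps)
  qed
  finally have upper: "line_primitive r (r / h) m = - arctan (1 / a)"
    by (simp add: arctan_minus)
  show "0 \<le> line_primitive (1 / r) 0 m" "line_primitive r (r / h) m \<le> 0"
    using \<open>0 < a\<close> by (simp_all add: lower upper)
  have "arctan (1 / a) = sgn a * pi / 2 - arctan a"
    using \<open>0 < a\<close> by (intro Transcendental.arctan_inverse) simp
  then show "line_primitive (1 / r) 0 m - line_primitive r (r / h) m = pi / 2"
    using \<open>0 < a\<close> by (simp add: lower upper)
qed

lemma hyp_area_orthoscheme_P0_ultraideal_subcritical:
  assumes r: "1 < r" and h: "1 \<le> h" "h\<^sup>2 * (1 - 1 / r\<^sup>2) < 1"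
  shows "hyp_area (orthoscheme r h) = ennreal (pi / 2)"
proof -
  define m where "m = h * (1 - 1 / r\<^sup>2)"
  have "h * m < 1"
    using h by (simp add: m_def power2_eq_square mult.assoc)
  then have "m < 1 / h"
    using h by (simp add: field_simps)
  note slices = orthoscheme_P0_ultraideal_slices_in_disc[OF r h(1) m_def less_imp_le[OF this]]
  have "0 < m"
    using r h by (simp add: m_def one_less_power)
  have "r - r / h * m = 1 / r"
    using r h by (simp add: m_def field_simps power2_eq_square)
  moreover have "(orthoscheme_width r h m)\<^sup>2 + m\<^sup>2 < 1"
    using \<open>0 < m\<close> \<open>m < 1 / h\<close> r h by (intro orthoscheme_width_in_disc) (simp_all add: orthoscheme_height_ge_one)
  ultimately have disc_m: "(1 / r)\<^sup>2 + m\<^sup>2 < 1" "(r - r / h * m)\<^sup>2 + m\<^sup>2 < 1"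
    using r h by (simp_all add: orthoscheme_width_P0_ultraideal m_def)
  have "0 < h"
    using h by simp
  note corner = line_primitives_at_polar_P0_corner[OF r this m_def less_imp_le[OF \<open>m < 1 / h\<close>] disc_m(1)]
  have "(\<integral>\<^sup>+y. indicator {0<..<m} y * ennreal (slice_area y (1 / r - 0 * y)) \<partial>lborel)
      = ennreal (line_primitive (1 / r) 0 m - 0)"
  proof (rule nn_integral_slice_area_line)
    show "(line_primitive (1 / r) 0 \<longlongrightarrow> 0) (at_right 0)"
      using line_primitive_tendsto_one_sided(2)[of "1 / r" 0 0] r
      by (simp add: line_primitive_def power_divide)
    show "(line_primitive (1 / r) 0 \<longlongrightarrow> line_primitive (1 / r) 0 m) (at_left m)"
      using disc_m(1) by (intro line_primitive_tendsto_one_sided) simp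
  qed (use \<open>0 < m\<close> slices(1) r in auto)
  moreover have "(\<integral>\<^sup>+y. indicator {m<..<1 / h} y * ennreal (slice_area y (r - r / h * y)) \<partial>lborel)
      = ennreal (0 - line_primitive r (r / h) m)"
  proof (rule nn_integral_slice_area_line)
    show "(line_primitive r (r / h) \<longlongrightarrow> line_primitive r (r / h) m) (at_right m)"
      using disc_m(2) by (rule line_primitive_tendsto_one_sided)
    have "r\<^sup>2 * (1 - 1 / h\<^sup>2) < 1"
      using h r by (simp add: field_simps power2_eq_square)
    then show "(line_primitive r (r / h) \<longlongrightarrow> 0) (at_left (1 / h))"
      using r h by (intro line_primitive_tendsto_polar_P2) auto
  qed (use \<open>m < 1 / h\<close> slices(2) in auto)
  ultimately show ?thesis
    using hyp_area_orthoscheme_split_at_polar_P0[OF r h(1) m_def less_imp_le[OF \<open>m < 1 / h\<close>]] corner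
    by (simp add: ennreal_plus[symmetric] del: ennreal_plus)
qed

text \<open>At the critical height the two polar lines meet on the unit circle, so the corner is ideal
  and the lower primitive alone tends to \<open>\<pi>/2\<close>.\<close>

lemma hyp_area_orthoscheme_P0_ultraideal_critical:
  assumes r: "1 < r" and h: "1 \<le> h" "h\<^sup>2 * (1 - 1 / r\<^sup>2) = 1"
  shows "hyp_area (orthoscheme r h) = ennreal (pi / 2)"
proof -
  define m where "m = h * (1 - 1 / r\<^sup>2)"
  have "m = 1 / h"
    using h by (simp add: m_def field_simps power2_eq_square)
  note slices = orthoscheme_P0_ultraideal_slices_in_disc[OF r h(1) m_def, unfolded \<open>m = 1 / h\<close>, simplified]
  have "0 < m"
    using h \<open>m = 1 / h\<close> by simp
  have "m\<^sup>2 = 1 - 1 / r\<^sup>2"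
    using h by (simp add: \<open>m = 1 / h\<close> field_simps power2_eq_square)
  have "(line_primitive (1 / r) 0 \<longlongrightarrow> sgn (m / r) * (pi / 2)) (at_left m)"
    unfolding line_primitive_def
  proof (rule tendsto_arctan_div_sqrt_vanishing)
    show "((\<lambda>y. 1 / r * y - 0) \<longlongrightarrow> m / r) (at_left m)"
      using r by (auto intro!: tendsto_eq_intros)
    show "((\<lambda>y. 1 - y\<^sup>2 - (1 / r - 0 * y)\<^sup>2) \<longlongrightarrow> 0) (at_left m)"
      using \<open>m\<^sup>2 = 1 - 1 / r\<^sup>2\<close> by (auto intro!: tendsto_eq_intros simp: power_divide)
    have "eventually (\<lambda>y. 0 < y \<and> y < m) (at_left m)"
      unfolding eventually_at_left_field using \<open>0 < m\<close> by (intro exI[of _ 0]) auto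
    then show "eventually (\<lambda>y. 0 < 1 - y\<^sup>2 - (1 / r - 0 * y)\<^sup>2) (at_left m)"
      by (rule eventually_mono) (use slices(1) \<open>m = 1 / h\<close> in force)
  qed (use \<open>0 < m\<close> r in simp)
  then have "(\<integral>\<^sup>+y. indicator {0<..<m} y * ennreal (slice_area y (1 / r - 0 * y)) \<partial>lborel) = ennreal (pi / 2 - 0)"
  proof (intro nn_integral_slice_area_line)
    show "(line_primitive (1 / r) 0 \<longlongrightarrow> 0) (at_right 0)"
      using line_primitive_tendsto_one_sided(2)[of "1 / r" 0 0] r
      by (simp add: line_primitive_def power_divide)
    show "(1 / r - 0 * y)\<^sup>2 + y\<^sup>2 < 1" if "0 < y" "y < m" for y
      using slices(1)[of y] that \<open>m = 1 / h\<close> by simp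
  qed (use \<open>0 < m\<close> r in auto)
  then show ?thesis
    using hyp_area_orthoscheme_split_at_polar_P0[OF r h(1) m_def] \<open>m = 1 / h\<close> by simp
qed

section \<open>Comparing areas\<close>

lemma arctan_diff_nonneg:
  fixes x y :: real
  assumes "0 \<le> x" "0 \<le> y"
  shows "arctan x - arctan y = arctan ((x - y) / (1 + x * y))"
proof (rule arctan_unique[symmetric])
  show "- (pi/2) < arctan x - arctan y" "arctan x - arctan y < pi/2"
    using assms arctan_bounded[of x] arctan_bounded[of y] zero_le_arctan_iff[of x]
      zero_le_arctan_iff[of y] by linarith+
  then have "cos (arctan x - arctan y) \<noteq> 0"
    using cos_gt_zero_pi by fastforce
  then show "tan (arctan x - arctan y) = (x - y) / (1 + x * y)"
    by (simp add: tan_diff cos_arctan_not_zero tan_arctan)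
qed

lemma orthoscheme_both_proper_key_ineq:
  fixes h t s :: real
  assumes "0 < h" "h < 1" "0 < t" "t < 1" "0 < s" "s\<^sup>2 = 1 - h\<^sup>2"
  shows "t * (1 - h) * h < s * (h * t\<^sup>2 + (1 - t\<^sup>2))"
proof -
  have "(1 - h)\<^sup>2 < s\<^sup>2"
    using assms unfolding assms(6) by (simp add: power2_eq_square algebra_simps)
  from power_less_imp_less_base[OF this] have "1 - h < s"
    using assms by simp
  have "h * t < 1 * t"
    using assms by (intro mult_strict_right_mono) auto
  then have "0 \<le> (1 - t) * (1 + t - h * t)"
    using assms by (intro mult_nonneg_nonneg) linarith+
  then have "t * h \<le> h * t\<^sup>2 + (1 - t\<^sup>2)"
    by (simp add: algebra_simps power2_eq_square)
  have "t * (1 - h) * h = (1 - h) * (t * h)"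
    by simp
  also have "\<dots> < s * (t * h)"
    using \<open>1 - h < s\<close> assms by (intro mult_strict_right_mono) auto
  also have "\<dots> \<le> s * (h * t\<^sup>2 + (1 - t\<^sup>2))"
    using \<open>t * h \<le> h * t\<^sup>2 + (1 - t\<^sup>2)\<close> assms by (intro mult_left_mono) auto
  finally show ?thesis .
qed

lemma orthoscheme_both_proper_area_lt:
  assumes "0 < r" "r < 1" "0 < h" "h < 1"
  shows "arctan (r / (h * sqrt (1 - r\<^sup>2))) - arctan (r * sqrt (1 - h\<^sup>2) / h) < arctan (r / sqrt (1 - r\<^sup>2))"
proof -
  define t where "t = sqrt (1 - r\<^sup>2)"
  define s where "s = sqrt (1 - h\<^sup>2)"
  define C where "C = h * t\<^sup>2 + r\<^sup>2"
  have "0 < 1 - r\<^sup>2" "0 < 1 - h\<^sup>2"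
    using assms by (simp_all add: power_less_one_iff)
  then have t: "0 < t" "t < 1" "r\<^sup>2 = 1 - t\<^sup>2" and s: "0 < s" "s\<^sup>2 = 1 - h\<^sup>2"
    using assms by (auto simp: t_def s_def)
  have C: "0 < C"
    unfolding C_def using assms t(1) by (intro add_nonneg_pos) auto
  have "arctan (r / t / h) - arctan (r / t) = arctan ((r / t / h - r / t) / (1 + r / t / h * (r / t)))"
    using assms t by (intro arctan_diff_nonneg) auto
  also have "(r / t / h - r / t) / (1 + r / t / h * (r / t)) = r * t * (1 - h) / C"
  proof -
    have "r / t / h - r / t = r * (1 - h) / (t * h)" "1 + r / t / h * (r / t) = C / (t\<^sup>2 * h)"
      using assms t(1) by (simp_all add: C_def field_simps power2_eq_square)
    then show ?thesis
      using assms t(1) C by (simp add: field_simps power2_eq_square)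
  qed
  also have "\<dots> < r * s / h"
  proof -
    have "r * (t * (1 - h) * h) < r * (s * C)"
      using orthoscheme_both_proper_key_ineq[OF assms(3,4) t(1,2) s] assms
      unfolding C_def t(3) by (intro mult_strict_left_mono)
    then show ?thesis
      using assms C by (simp add: field_simps mult_ac)
  qed
  finally have "arctan (r / t / h) - arctan (r * s / h) < arctan (r / t)"
    by (simp add: arctan_less_iff)
  then show ?thesis
    by (simp add: t_def s_def mult.commute)
qed

lemma orthoscheme_subset_height_one:
  assumes "0 < r" "0 < h" "h < 1"
  shows "orthoscheme r h \<subseteq> orthoscheme r 1"
proof safe
  fix x y assume "(x, y) \<in> orthoscheme r h"
  then have xy: "0 \<le> y" "x / r + y / h \<le> 1"
    using assms by (simp_all add: mem_orthoscheme)
  have "y \<le> y / h"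
    using xy(1) assms by (simp add: field_simps mult_left_le_one_le)
  with xy \<open>(x, y) \<in> orthoscheme r h\<close> show "(x, y) \<in> orthoscheme r 1"
    using assms by (simp add: mem_orthoscheme)
qed

lemma le_critical_height_iff:
  fixes r h :: real
  assumes "1 < r" "0 < h"
  shows "h \<le> r / sqrt (r\<^sup>2 - 1) \<longleftrightarrow> h\<^sup>2 * (1 - 1 / r\<^sup>2) \<le> 1"
proof -
  have "0 < r\<^sup>2 - 1"
    using assms by (simp add: one_less_power)
  then have "h \<le> r / sqrt (r\<^sup>2 - 1) \<longleftrightarrow> h\<^sup>2 \<le> (r / sqrt (r\<^sup>2 - 1))\<^sup>2"
    using assms by (intro power_mono_iff[symmetric]) auto
  also have "\<dots> \<longleftrightarrow> h\<^sup>2 * (1 - 1 / r\<^sup>2) \<le> 1"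
    using \<open>0 < r\<^sup>2 - 1\<close> assms by (simp add: power_divide field_simps)
  finally show ?thesis .
qed

lemma orthoscheme_subset_critical_height:
  assumes "1 < r" "1 \<le> k" "k\<^sup>2 * (1 - 1 / r\<^sup>2) = 1" "k < h"
  shows "orthoscheme r h \<subseteq> orthoscheme r k"
proof safe
  fix x y assume xy: "(x, y) \<in> orthoscheme r h"
  have "1 < h"
    using assms by simp
  with xy have "0 \<le> x" "0 \<le> y" "x * r \<le> 1" "y * h \<le> 1"
    using assms by (simp_all add: mem_orthoscheme)
  have x: "x / r \<le> 1 / r\<^sup>2"
    using \<open>x * r \<le> 1\<close> assms by (simp add: field_simps power2_eq_square)
  have "y * k \<le> 1"
    using \<open>y * h \<le> 1\<close> \<open>0 \<le> y\<close> assms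
    by (smt (verit) mult_left_mono)
  then have "y / k \<le> 1 / k\<^sup>2"
    using assms by (simp add: field_simps power2_eq_square)
  also have "1 / k\<^sup>2 = 1 - 1 / r\<^sup>2"
    using assms by (simp add: field_simps)
  finally have "x / r + y / k \<le> 1"
    using x by linarith
  with xy \<open>y * k \<le> 1\<close> show "(x, y) \<in> orthoscheme r k"
    using assms by (auto simp: mem_orthoscheme)
qed

lemma vertex_angle_orthoscheme:
  assumes "0 < r" "r < 1"
  shows "vertex_angle (r, 0) (0, 0) (0, 1) = arccos r"
proof -
  define D where "D = 1 - r\<^sup>2"
  have D: "0 < D"
    using assms by (simp add: D_def power_less_one_iff)
  have norm: "(norm (r, 0::real))\<^sup>2 = r\<^sup>2"
    by (simp add: norm_Pair)
  have metric: "klein_metric (r, 0) (-r, 0) (-r, 1) = r\<^sup>2 / D\<^sup>2"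
    "klein_metric (r, 0) (-r, 0) (-r, 0) = r\<^sup>2 / D\<^sup>2"
    "klein_metric (r, 0) (-r, 1) (-r, 1) = 1 / D\<^sup>2"
    unfolding klein_metric_def norm D_def[symmetric] using D
    by (simp_all add: inner_Pair divide_simps power2_eq_square) (simp_all add: D_def algebra_simps power2_eq_square)
  have "sqrt (r\<^sup>2 / D\<^sup>2 * (1 / D\<^sup>2)) = r / D\<^sup>2"
    using assms D by (simp add: real_sqrt_divide power2_eq_square real_sqrt_mult)
  then show ?thesis
    using assms D by (simp add: vertex_angle_def klein_angle_def metric power2_eq_square)
qed

lemma hyp_area_orthoscheme_lt_height_one:
  assumes "0 < r" "r < 1" "0 < h" "h \<noteq> 1"
  shows "hyp_area (orthoscheme r h) < hyp_area (orthoscheme r 1)"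
proof -
  have "0 < 1 - r\<^sup>2"
    using assms by (simp add: power_less_one_iff)
  then have pos: "0 < arctan (r / sqrt (1 - r\<^sup>2))"
    using assms by simp
  have "hyp_area (orthoscheme r h) < ennreal (arctan (r / sqrt (1 - r\<^sup>2)))"
  proof (cases "h < 1")
    case True
    then show ?thesis
      using assms pos orthoscheme_both_proper_area_lt[of r h]
      by (simp add: hyp_area_orthoscheme_both_proper ennreal_lessI)
  next
    case False
    then have "r / (h * sqrt (1 - r\<^sup>2)) < r / sqrt (1 - r\<^sup>2)"
      using assms \<open>0 < 1 - r\<^sup>2\<close> by (simp add: divide_strict_left_mono)
    then show ?thesis
      using assms False pos by (simp add: hyp_area_orthoscheme_P0_proper arctan_less_iff ennreal_lessI)
  qed
  then show ?thesis
    using assms hyp_area_orthoscheme_P0_proper[of r 1] by simp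
qed

lemma hyp_area_orthoscheme_height_one_vertex_angle:
  assumes "0 < r" "r < 1"
  shows "hyp_area (orthoscheme r 1) = ennreal (pi / 2 - vertex_angle (r, 0) (0, 0) (0, 1))"
proof -
  have "pi / 2 - arccos r = arctan (r / sqrt (1 - r\<^sup>2))"
    using assms by (simp add: arcsin_arccos_eq[symmetric] arcsin_arctan)
  then show ?thesis
    using assms by (simp add: hyp_area_orthoscheme_P0_proper vertex_angle_orthoscheme)
qed

lemma hyp_area_orthoscheme_P0_ultraideal:
  assumes "1 < r" "1 \<le> h" "h \<le> r / sqrt (r\<^sup>2 - 1)"
  shows "hyp_area (orthoscheme r h) = ennreal (pi / 2)"
proof -
  have "h\<^sup>2 * (1 - 1 / r\<^sup>2) \<le> 1"
    using assms le_critical_height_iff[of r h] by simp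
  then consider "h\<^sup>2 * (1 - 1 / r\<^sup>2) < 1" | "h\<^sup>2 * (1 - 1 / r\<^sup>2) = 1"
    by linarith
  then show ?thesis
    using assms hyp_area_orthoscheme_P0_ultraideal_subcritical hyp_area_orthoscheme_P0_ultraideal_critical
    by cases auto
qed

lemma hyp_area_orthoscheme_height_one_P0_not_proper:
  assumes "1 \<le> r"
  shows "hyp_area (orthoscheme r 1) = ennreal (pi / 2)"
proof (cases "r = 1")
  case False
  then have "1 < r"
    using assms by simp
  moreover have "1 \<le> r / sqrt (r\<^sup>2 - 1)"
    using le_critical_height_iff[OF \<open>1 < r\<close>, of 1] by simp
  ultimately show ?thesis
    by (simp add: hyp_area_orthoscheme_P0_ultraideal)
qed (simp add: hyp_area_orthoscheme_P0_ideal)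

lemma hyp_area_orthoscheme_le_pi_half:
  assumes "1 \<le> r" "0 < h"
  shows "hyp_area (orthoscheme r h) \<le> ennreal (pi / 2)"
proof (cases "h < 1")
  case True
  then have "hyp_area (orthoscheme r h) \<le> hyp_area (orthoscheme r 1)"
    using assms by (intro hyp_area_mono orthoscheme_subset_height_one) auto
  then show ?thesis
    using assms by (simp add: hyp_area_orthoscheme_height_one_P0_not_proper)
next
  case False
  show ?thesis
  proof (cases "r = 1")
    case True
    then show ?thesis
      using False by (simp add: hyp_area_orthoscheme_P0_ideal)
  next
    case r_ne: False
    define k where "k = r / sqrt (r\<^sup>2 - 1)"
    have "1 < r"
      using assms r_ne by simp
    have "0 < r\<^sup>2 - 1"
      using \<open>1 < r\<close> by (simp add: one_less_power)
    then have "k\<^sup>2 * (1 - 1 / r\<^sup>2) = 1"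
      using \<open>1 < r\<close> by (simp add: k_def power_divide field_simps)
    moreover have "1 \<le> k"
      using le_critical_height_iff[OF \<open>1 < r\<close>, of 1] by (simp add: k_def)
    ultimately have at_k: "hyp_area (orthoscheme r k) = ennreal (pi / 2)"
      using \<open>1 < r\<close> by (simp add: hyp_area_orthoscheme_P0_ultraideal_critical)
    show ?thesis
    proof (cases "h \<le> k")
      case True
      then show ?thesis
        using False \<open>1 < r\<close> by (simp add: k_def hyp_area_orthoscheme_P0_ultraideal)
    next
      case False
      then have "hyp_area (orthoscheme r h) \<le> hyp_area (orthoscheme r k)"
        using \<open>1 < r\<close> \<open>1 \<le> k\<close> \<open>k\<^sup>2 * (1 - 1 / r\<^sup>2) = 1\<close>
        by (intro hyp_area_mono orthoscheme_subset_critical_height) auto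
      then show ?thesis
        using at_k by simp
    qed
  qed
qed

theorem theorem2:
  fixes r :: real
  assumes "r > 0"
  defines "A \<equiv> (\<lambda>h. hyp_area (orthoscheme r h))"
  shows "(r < 1 \<longrightarrow>
            (\<forall>h>0. A h \<le> A 1) \<and> (\<forall>h>0. A h = A 1 \<longrightarrow> h = 1) \<and>
            A 1 = ennreal (pi/2 - vertex_angle (r,0) (0,0) (0,1)))
       \<and> (r = 1 \<longrightarrow>
            (\<forall>h>0. A h \<le> ennreal (pi/2)) \<and> (\<forall>h\<ge>1. A h = ennreal (pi/2)))
       \<and> (r > 1 \<longrightarrow>
            (\<forall>h>0. A h \<le> ennreal (pi/2)) \<and>
            (\<forall>h. 1 \<le> h \<and> h \<le> r / sqrt (r\<^sup>2 - 1) \<longrightarrow> A h = ennreal (pi/2)))"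
proof (intro conjI impI)
  assume "r < 1"
  then have lt: "A h < A 1" if "0 < h" "h \<noteq> 1" for h
    using that assms unfolding A_def by (intro hyp_area_orthoscheme_lt_height_one)
  then show "\<forall>h>0. A h \<le> A 1"
    by (auto intro: less_imp_le)
  show "\<forall>h>0. A h = A 1 \<longrightarrow> h = 1"
  proof (intro allI impI)
    fix h :: real assume "0 < h" "A h = A 1"
    then show "h = 1"
      using lt[of h] by (cases "h = 1") simp_all
  qed
  show "A 1 = ennreal (pi/2 - vertex_angle (r,0) (0,0) (0,1))"
    unfolding A_def using \<open>r > 0\<close> \<open>r < 1\<close> by (rule hyp_area_orthoscheme_height_one_vertex_angle)
next
  assume "r = 1"
  then show "\<forall>h>0. A h \<le> ennreal (pi/2)" "\<forall>h\<ge>1. A h = ennreal (pi/2)"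
    unfolding A_def by (simp_all add: hyp_area_orthoscheme_le_pi_half hyp_area_orthoscheme_P0_ideal)
next
  assume "r > 1"
  then show "\<forall>h>0. A h \<le> ennreal (pi/2)"
      "\<forall>h. 1 \<le> h \<and> h \<le> r / sqrt (r\<^sup>2 - 1) \<longrightarrow> A h = ennreal (pi/2)"
    unfolding A_def by (simp_all add: hyp_area_orthoscheme_le_pi_half hyp_area_orthoscheme_P0_ultraideal)
qed

end
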